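(* Let $a:[0,1]\to[0,\infty)$ be bounded and measurable. There exist constants $h_0>0$ and $\gamma_0>0$ such that for every $N\ge1$ with $h=1/(N+1)\in(0,h_0)$ and all nonzero integers $n\ne m$ with $|n|,|m|\le N$, one has $|\lambda_h^n-\lambda_h^m|\ge\gamma_0$.
   Context: For $N\ge1$, $h=1/(N+1)$, $x_j=jh$, $a_j=a(x_j)$; $K_h=\frac1h\mathrm{tridiag}(-1,2,-1)$, $M_h=\frac h4\mathrm{tridiag}(1,2,1)$, $L_h=h\,\mathrm{diag}(a_1,\dots,a_N)$. Let $0<\mu_h^1<\dots<\mu_h^N$ be the (simple, positive) eigenvalues of $M_h^{-1}(K_h+L_h)$, and for $1\le|n|\le N$ let $\lambda_h^n=\mathrm{sgn}(n)\sqrt{\mu_h^{|n|}}$; the numbers $i\lambda_h^n$ are exactly the eigenvalues of the $2N\times2N$ matrix $\mathcal A_h=\begin{pmatrix}0&-I\\ M_h^{-1}(K_h+L_h)&0\end{pmatrix}$. *)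

theory Defs
  imports "HOL-Analysis.Analysis" "Jordan_Normal_Form.Gauss_Jordan_Elimination" "Jordan_Normal_Form.Char_Poly"
begin

text \<open>Mesh size h = 1/(N+1); nodes x_j = j h, j = 1..N (matrix row/column index i = j - 1).\<close>
definition mesh :: "nat \<Rightarrow> real" where "mesh N = 1 / (real N + 1)"

definition K_h :: "nat \<Rightarrow> real mat" where
  "K_h N = mat N N (\<lambda>(i,j). (1 / mesh N) *
      (if i = j then 2 else if i = j + 1 \<or> j = i + 1 then -1 else 0))"

definition M_h :: "nat \<Rightarrow> real mat" where
  "M_h N = mat N N (\<lambda>(i,j). (mesh N / 4) *
      (if i = j then 2 else if i = j + 1 \<or> j = i + 1 then 1 else 0))"

definition L_h :: "(real \<Rightarrow> real) \<Rightarrow> nat \<Rightarrow> real mat" where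
  "L_h a N = mat N N (\<lambda>(i,j). if i = j then mesh N * a (real (i + 1) * mesh N) else 0)"

definition op_h :: "(real \<Rightarrow> real) \<Rightarrow> nat \<Rightarrow> real mat" where
  "op_h a N = the (mat_inverse (M_h N)) * (K_h N + L_h a N)"

definition mu_h :: "(real \<Rightarrow> real) \<Rightarrow> nat \<Rightarrow> nat \<Rightarrow> real" where
  "mu_h a N k = sorted_list_of_set {\<mu>. eigenvalue (op_h a N) \<mu>} ! (k - 1)"

definition lambda_h :: "(real \<Rightarrow> real) \<Rightarrow> nat \<Rightarrow> int \<Rightarrow> real" where
  "lambda_h a N n = of_int (sgn n) * sqrt (mu_h a N (nat \<bar>n\<bar>))"

end

theory Submission
  imports Defs
begin

text \<open>For \<open>x \<in> (0, \<pi>/2)\<close> put \<open>\<mu> = (2 tan x / h)\<^sup>2\<close>. The row equations of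
  \<open>(K\<^sub>h + L\<^sub>h) w = \<mu> M\<^sub>h w\<close> with \<open>w\<^sub>0 = 0\<close>, \<open>w\<^sub>1 = 1\<close> determine \<open>w\<^sub>2, \<dots>, w\<^sub>N\<^sub>+\<^sub>1\<close> by a
  three-term recurrence, and \<open>\<mu>\<close> is an eigenvalue as soon as \<open>w\<^sub>N\<^sub>+\<^sub>1 = 0\<close>. In polar form
  \<open>w\<^sub>j\<^sub>+\<^sub>1 = r\<^sub>j sin \<psi>\<^sub>j\<close>, the discrete Pruefer phase \<open>\<psi>\<^sub>N\<close> is increasing on
  \<open>[arctan (h/2), \<pi>/2]\<close>, runs from below \<open>\<pi>\<close> up to \<open>(N + 1) \<pi>\<close>, and its slope is at most
  \<open>C (N + 1)\<close> with \<open>C\<close> depending only on a bound \<open>A\<close> for \<open>a\<close>, as long as \<open>h A \<le> 1/2\<close>.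
  So \<open>\<psi>\<^sub>N\<close> meets \<open>\<pi>, 2\<pi>, \<dots>, N\<pi>\<close> at points \<open>x\<^sub>k\<close> spaced at least \<open>\<pi> / (C (N + 1))\<close> apart;
  since \<open>tan\<close> has slope at least 1, the numbers \<open>\<surd>\<mu> = 2 tan x\<^sub>k / h\<close> are \<open>2\<pi>/C\<close> apart, and as
  \<open>M\<^sub>h\<^sup>-\<^sup>1 (K\<^sub>h + L\<^sub>h)\<close> has at most \<open>N\<close> eigenvalues these are all of them. Finally
  \<open>\<surd>\<mu> \<ge> 1\<close> keeps \<open>\<lambda>\<^sub>h\<^sup>n\<close> of opposite signs at distance at least 2.\<close>

section \<open>The discrete eigenvalue problem\<close>

definition tridiag_mat :: "nat \<Rightarrow> real \<Rightarrow> real \<Rightarrow> real \<Rightarrow> real mat" where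
  "tridiag_mat n c p q =
     mat n n (\<lambda>(i, j). c * (if i = j then p else if i = j + 1 \<or> j = i + 1 then q else 0))"

lemma K_h_eq_tridiag_mat: "K_h N = tridiag_mat N (1 / mesh N) 2 (-1)"
  by (simp add: K_h_def tridiag_mat_def)

lemma M_h_eq_tridiag_mat: "M_h N = tridiag_mat N (mesh N / 4) 2 1"
  by (simp add: M_h_def tridiag_mat_def)

lemma K_h_carrier [simp]: "K_h N \<in> carrier_mat N N"
  and M_h_carrier [simp]: "M_h N \<in> carrier_mat N N"
  and L_h_carrier [simp]: "L_h a N \<in> carrier_mat N N"
  and dim_M_h [simp]: "dim_row (M_h N) = N" "dim_col (M_h N) = N"
  and dim_L_h [simp]: "dim_row (L_h a N) = N" "dim_col (L_h a N) = N"
  by (simp_all add: K_h_def M_h_def L_h_def)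

lemma mesh_pos: "0 < mesh N"
  by (simp add: mesh_def)

definition nodal_vec :: "nat \<Rightarrow> (nat \<Rightarrow> real) \<Rightarrow> real vec" where
  "nodal_vec n w = vec n (\<lambda>i. w (Suc i))"

lemma nodal_vec_carrier [simp]: "nodal_vec n w \<in> carrier_vec n"
  by (simp add: nodal_vec_def)

lemma tridiag_mat_mult_nodal_vec:
  assumes i: "i < n" and w0: "w 0 = 0" and wn: "w (Suc n) = 0"
  shows "(tridiag_mat n c p q *\<^sub>v nodal_vec n w) $ i
           = c * (p * w (Suc i) + q * w i + q * w (Suc (Suc i)))"
proof -
  have entry: "c * (if i = j then p else if i = j + 1 \<or> j = i + 1 then q else 0) * w (Suc j)
      = c * p * (if j = i then w (Suc j) else 0) + c * q * (if j + 1 = i then w (Suc j) else 0)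
        + c * q * (if j = i + 1 then w (Suc j) else 0)" for j
    by auto
  have below: "(\<Sum>j<n. if j + 1 = i then w (Suc j) else 0) = w i"
  proof (cases i)
    case (Suc k)
    then have "(\<Sum>j<n. if j + 1 = i then w (Suc j) else 0) = (\<Sum>j<n. if j = k then w (Suc j) else 0)"
      by (intro sum.cong) auto
    then show ?thesis using i Suc by simp
  qed (simp add: w0)
  have above: "(\<Sum>j<n. if j = i + 1 then w (Suc j) else 0) = w (Suc (Suc i))"
    using i wn by (cases "Suc i = n") auto
  have "(tridiag_mat n c p q *\<^sub>v nodal_vec n w) $ i
      = (\<Sum>j<n. c * (if i = j then p else if i = j + 1 \<or> j = i + 1 then q else 0) * w (Suc j))"
    using i by (simp add: tridiag_mat_def nodal_vec_def mult_mat_vec_def scalar_prod_def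
        lessThan_atLeast0)
  also have "\<dots> = c * (p * w (Suc i) + q * w i + q * w (Suc (Suc i)))"
    unfolding entry sum.distrib sum_distrib_left[symmetric] below above
    using i by (simp add: algebra_simps)
  finally show ?thesis .
qed

lemma L_h_mult_nodal_vec:
  assumes "i < N"
  shows "(L_h a N *\<^sub>v nodal_vec N w) $ i = mesh N * a (real (i + 1) * mesh N) * w (Suc i)"
proof -
  have "(L_h a N *\<^sub>v nodal_vec N w) $ i
      = (\<Sum>j<N. (if i = j then mesh N * a (real (i + 1) * mesh N) else 0) * w (Suc j))"
    using assms by (simp add: L_h_def nodal_vec_def mult_mat_vec_def scalar_prod_def lessThan_atLeast0)
  also have "\<dots> = (\<Sum>j<N. if j = i then mesh N * a (real (i + 1) * mesh N) * w (Suc j) else 0)"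
    by (intro sum.cong) auto
  finally show ?thesis using assms by simp
qed

lemma alternating_recurrence_solution:
  fixes w :: "nat \<Rightarrow> real"
  assumes w0: "w 0 = 0"
    and step: "\<And>j. 1 \<le> j \<Longrightarrow> j \<le> N \<Longrightarrow> w (Suc j) = -2 * w j - w (j - 1)"
  shows "j \<le> Suc N \<Longrightarrow> w j = (-1) ^ (j + 1) * real j * w 1"
proof (induction j rule: less_induct)
  case (less j)
  consider "j = 0" | "j = 1" | k where "j = Suc (Suc k)"
    by (cases j; cases "j - 1") auto
  then show ?case
  proof cases
    case 3
    then have "w j = -2 * w (Suc k) - w k" using step[of "Suc k"] less.prems by simp
    then show ?thesis using less.IH[of k] less.IH[of "Suc k"] 3 less.prems
      by (simp add: algebra_simps)
  qed (simp_all add: w0)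
qed

lemma det_M_h_nonzero: "det (M_h N) \<noteq> 0"
proof
  assume "det (M_h N) = 0"
  then obtain v where v: "v \<in> carrier_vec N" "v \<noteq> 0\<^sub>v N" "M_h N *\<^sub>v v = 0\<^sub>v N"
    using det_0_iff_vec_prod_zero_field[of "M_h N" N] by auto
  define w where "w j = (if 1 \<le> j \<and> j \<le> N then v $ (j - 1) else 0)" for j
  have w0: "w 0 = 0" and wN: "w (Suc N) = 0" by (auto simp: w_def)
  have v_eq: "v = nodal_vec N w" using v(1) by (intro eq_vecI) (auto simp: nodal_vec_def w_def)
  have step: "w (Suc j) = -2 * w j - w (j - 1)" if "1 \<le> j" "j \<le> N" for j
  proof -
    have "(M_h N *\<^sub>v nodal_vec N w) $ (j - 1) = 0" using v(3) v_eq that by simp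
    then have "mesh N / 4 * (2 * w j + w (j - 1) + w (Suc j)) = 0"
      unfolding M_h_eq_tridiag_mat using tridiag_mat_mult_nodal_vec[OF _ w0 wN, of "j - 1"] that
      by simp
    then show ?thesis using mesh_pos[of N] by simp
  qed
  have w: "w j = (-1) ^ (j + 1) * real j * w 1" if "j \<le> Suc N" for j
    using alternating_recurrence_solution[of w N j] w0 step that by blast
  have "w 1 = 0" using w[of "Suc N"] wN by simp
  then have "w j = 0" if "j \<le> Suc N" for j using w[OF that] by simp
  then have "nodal_vec N w = 0\<^sub>v N" by (intro eq_vecI) (auto simp: nodal_vec_def)
  then show False using v(2) v_eq by simp
qed

lemma M_h_inverse:
  obtains Mi where "mat_inverse (M_h N) = Some Mi" "Mi * M_h N = 1\<^sub>m N" "Mi \<in> carrier_mat N N"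
proof (cases "mat_inverse (M_h N)")
  case None
  have M: "M_h N \<in> carrier_mat N N" by simp
  have "M_h N \<in> Units (ring_mat TYPE(real) N ())"
    using det_non_zero_imp_unit[OF M det_M_h_nonzero] .
  moreover have "M_h N \<notin> Units (ring_mat TYPE(real) N ())"
    by (rule mat_inverse(1)[OF M None])
  ultimately show ?thesis by contradiction
next
  case (Some Mi)
  then show ?thesis using that mat_inverse(2)[of "M_h N" N Mi] by simp
qed

lemma op_h_carrier: "op_h a N \<in> carrier_mat N N"
proof -
  obtain Mi where "mat_inverse (M_h N) = Some Mi" "Mi \<in> carrier_mat N N"
    using M_h_inverse by blast
  then show ?thesis by (simp add: op_h_def)
qed

lemma eigenvalue_op_h_if_rows:
  assumes w0: "w 0 = 0" and wN: "w (Suc N) = 0" and w1: "w 1 \<noteq> 0" and N: "1 \<le> N"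
    and rows: "\<And>i. i < N \<Longrightarrow>
      (1 / mesh N) * (2 * w (Suc i) - w i - w (Suc (Suc i))) + mesh N * a (real (i + 1) * mesh N) * w (Suc i)
        = \<mu> * ((mesh N / 4) * (2 * w (Suc i) + w i + w (Suc (Suc i))))"
  shows "eigenvalue (op_h a N) \<mu>"
proof -
  obtain Mi where Mi: "mat_inverse (M_h N) = Some Mi" "Mi * M_h N = 1\<^sub>m N" "Mi \<in> carrier_mat N N"
    using M_h_inverse by blast
  define v where "v = nodal_vec N w"
  have v: "v \<in> carrier_vec N" by (simp add: v_def)
  have "v $ 0 \<noteq> 0" using w1 N by (simp add: v_def nodal_vec_def)
  then have v_nonzero: "v \<noteq> 0\<^sub>v N" using N by auto
  have KL: "(K_h N + L_h a N) *\<^sub>v v = \<mu> \<cdot>\<^sub>v (M_h N *\<^sub>v v)"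
  proof (rule eq_vecI)
    fix i assume "i < dim_vec (\<mu> \<cdot>\<^sub>v (M_h N *\<^sub>v v))"
    then have i: "i < N" by simp
    have "((K_h N + L_h a N) *\<^sub>v v) $ i = (K_h N *\<^sub>v v) $ i + (L_h a N *\<^sub>v v) $ i"
      using i v by (simp add: add_mult_distrib_mat_vec[of _ N N])
    also have "\<dots> = \<mu> * (M_h N *\<^sub>v v) $ i"
      using rows[OF i] unfolding v_def K_h_eq_tridiag_mat M_h_eq_tridiag_mat
        tridiag_mat_mult_nodal_vec[OF i w0 wN] L_h_mult_nodal_vec[OF i] by simp
    finally show "((K_h N + L_h a N) *\<^sub>v v) $ i = (\<mu> \<cdot>\<^sub>v (M_h N *\<^sub>v v)) $ i"
      using i by simp
  qed simp
  have "op_h a N *\<^sub>v v = Mi *\<^sub>v ((K_h N + L_h a N) *\<^sub>v v)"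
    unfolding op_h_def Mi(1) using Mi(3) v
    by (simp add: assoc_mult_mat_vec[of _ N N _ N])
  also have "\<dots> = \<mu> \<cdot>\<^sub>v (Mi *\<^sub>v (M_h N *\<^sub>v v))"
    unfolding KL using Mi(3) v
    by (intro mult_mat_vec[of _ N N] mult_mat_vec_carrier[of _ N N] M_h_carrier)
  also have "Mi *\<^sub>v (M_h N *\<^sub>v v) = v"
    using Mi v by (simp add: assoc_mult_mat_vec[of _ N N _ N, symmetric])
  finally show ?thesis
    unfolding eigenvalue_def eigenvector_def using v v_nonzero op_h_carrier[of a N] by auto
qed

lemma eigenvalues_finite_card_le:
  fixes A :: "'a :: field mat"
  assumes "A \<in> carrier_mat n n"
  shows "finite {\<mu>. eigenvalue A \<mu>}" "card {\<mu>. eigenvalue A \<mu>} \<le> n"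
proof -
  have deg: "degree (char_poly A) = n" and "coeff (char_poly A) n = 1"
    using degree_monic_char_poly[OF assms] by auto
  then have nz: "char_poly A \<noteq> 0" by auto
  have eq: "{\<mu>. eigenvalue A \<mu>} = {\<mu>. poly (char_poly A) \<mu> = 0}"
    using eigenvalue_root_char_poly[OF assms] by auto
  show "finite {\<mu>. eigenvalue A \<mu>}" unfolding eq using poly_roots_finite[OF nz] .
  show "card {\<mu>. eigenvalue A \<mu>} \<le> n" unfolding eq using card_poly_roots_bound[OF nz] deg by simp
qed

section \<open>The phase map\<close>

text \<open>\<open>phase_step p t\<close> is the polar angle of the vector \<open>(cos p + t sin p, sin p)\<close>, taken on the
  branch through \<open>p\<close> (lemma \<open>cos_sin_phase_step\<close>); \<open>phase_norm2 p t\<close> is the squared length of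
  that vector.\<close>

definition phase_step :: "real \<Rightarrow> real \<Rightarrow> real" where
  "phase_step p t = p - arctan (t * sin p ^ 2 / (1 + t * sin p * cos p))"

definition phase_norm2 :: "real \<Rightarrow> real \<Rightarrow> real" where
  "phase_norm2 p t = (cos p + t * sin p)^2 + sin p ^ 2"

lemma phase_norm2_alt: "phase_norm2 p t = (1 + t * sin p * cos p)^2 + (t * sin p ^ 2)^2"
proof -
  have "(c + t * s)^2 + s^2 - ((1 + t * s * c)^2 + (t * s^2)^2) = (s^2 + c^2 - 1) * (1 - t^2 * s^2)"
    for s c :: real
    by (simp add: power2_eq_square algebra_simps)
  from this[where s = "sin p" and c = "cos p"] show ?thesis
    unfolding phase_norm2_def by simp
qed

lemma abs_sin_mult_cos_le: "\<bar>sin p * cos p\<bar> \<le> 1/2" for p :: real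
  using abs_sin_le_one[of "2 * p"] unfolding sin_double by (simp add: abs_mult)

lemma sin_mult_cos_ge: "- \<bar>t\<bar> \<le> 2 * t * sin p * cos p" for t p :: real
proof -
  have "\<bar>2 * t * sin p * cos p\<bar> \<le> \<bar>t\<bar>"
    using mult_left_mono[OF abs_sin_mult_cos_le[of p], of "2 * \<bar>t\<bar>"] by (simp add: abs_mult)
  then show ?thesis by linarith
qed

lemma phase_denom_pos: "\<bar>t\<bar> < 2 \<Longrightarrow> 0 < 1 + t * sin p * cos p" for t p :: real
  using sin_mult_cos_ge[of t p] by linarith

lemma phase_norm2_ge: "1 - \<bar>t\<bar> \<le> phase_norm2 p t"
proof -
  have "phase_norm2 p t = sin p ^ 2 + cos p ^ 2 + 2 * t * sin p * cos p + t^2 * sin p ^ 2"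
    unfolding phase_norm2_def by (simp add: power2_eq_square algebra_simps)
  moreover have "0 \<le> t^2 * sin p ^ 2" by simp
  ultimately show ?thesis using sin_mult_cos_ge[of t p] sin_cos_squared_add[of p] by linarith
qed

lemma phase_step_zero [simp]: "phase_step p 0 = p"
  by (simp add: phase_step_def)

lemma phase_step_le: "0 \<le> t \<Longrightarrow> 0 < 1 + t * sin p * cos p \<Longrightarrow> phase_step p t \<le> p"
  unfolding phase_step_def by simp

lemma cos_sin_phase_step:
  assumes pos: "0 < 1 + t * sin p * cos p"
  obtains \<rho> where "0 < \<rho>" "cos (phase_step p t) = \<rho> * (cos p + t * sin p)"
    "sin (phase_step p t) = \<rho> * sin p"
proof -
  define E where "E = 1 + t * sin p * cos p"
  define u where "u = t * sin p ^ 2 / E"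
  define \<kappa> where "\<kappa> = 1 / sqrt (1 + u^2)"
  have "0 < \<kappa>" unfolding \<kappa>_def by (simp add: add_pos_nonneg)
  have E: "0 < E" using pos by (simp add: E_def)
  have step: "phase_step p t = p - arctan u" by (simp add: phase_step_def u_def E_def)
  have arctan: "cos (arctan u) = \<kappa>" "sin (arctan u) = u * \<kappa>"
    unfolding \<kappa>_def cos_arctan sin_arctan by simp_all
  have "cos (phase_step p t) = \<kappa> * (cos p + sin p * u)"
    unfolding step cos_diff arctan by (simp add: algebra_simps)
  also have "cos p + sin p * u = (cos p * E + t * sin p * sin p ^ 2) / E"
    using E by (simp add: u_def field_simps power2_eq_square)
  also have "cos p * E + t * sin p * sin p ^ 2 = cos p + t * sin p * (sin p ^ 2 + cos p ^ 2)"
    unfolding E_def power2_eq_square by (simp only: algebra_simps)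
  finally have "cos (phase_step p t) = \<kappa> / E * (cos p + t * sin p)"
    by simp
  moreover have "sin (phase_step p t) = \<kappa> * (sin p - cos p * u)"
    unfolding step sin_diff arctan by (simp add: algebra_simps)
  moreover have "sin p - cos p * u = sin p / E"
    using E by (simp add: u_def E_def field_simps power2_eq_square)
  ultimately show ?thesis using that[of "\<kappa> / E"] \<open>0 < \<kappa>\<close> E by simp
qed

lemma phase_step_has_derivative:
  assumes p: "(p has_real_derivative p') (at x)" and t: "(t has_real_derivative t') (at x)"
    and pos: "0 < 1 + t x * sin (p x) * cos (p x)"
  shows "((\<lambda>x. phase_step (p x) (t x)) has_real_derivative
           (p' - t' * sin (p x) ^ 2) / phase_norm2 (p x) (t x)) (at x)"
proof -
  define s c T where "s = sin (p x)" and "c = cos (p x)" and "T = t x"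
  define E D where "E = 1 + T * s * c" and "D = phase_norm2 (p x) (t x)"
  have E: "0 < E" using pos by (simp add: E_def s_def c_def T_def)
  have D: "D = E^2 + (T * s^2)^2" by (simp add: D_def E_def phase_norm2_alt s_def c_def T_def)
  have "0 < D" using E unfolding D by (simp add: add_pos_nonneg)
  have u: "((\<lambda>x. t x * sin (p x) ^ 2 / (1 + t x * sin (p x) * cos (p x))) has_real_derivative
      (t' * s^2 + p' * (D - 1)) / E^2) (at x)"
    apply (rule derivative_eq_intros p t refl)+
    using E apply (simp add: E_def s_def c_def T_def)
    using E apply (simp add: D E_def s_def c_def T_def field_simps power2_eq_square)
    done
  have arc: "((\<lambda>x. arctan (t x * sin (p x) ^ 2 / (1 + t x * sin (p x) * cos (p x))))
      has_real_derivative inverse (1 + (T * s^2 / E)^2) * ((t' * s^2 + p' * (D - 1)) / E^2)) (at x)"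
    using DERIV_chain2[OF DERIV_arctan u] by (simp only: E_def s_def c_def T_def)
  have "inverse (1 + (T * s^2 / E)^2) = E^2 / D"
    using E by (simp add: D field_simps)
  then have deriv_eq: "p' - inverse (1 + (T * s^2 / E)^2) * ((t' * s^2 + p' * (D - 1)) / E^2)
      = (p' - t' * s^2) / D"
    using E \<open>0 < D\<close> by (simp add: field_simps)
  show ?thesis
    using DERIV_diff[OF p arc] unfolding deriv_eq unfolding phase_step_def D_def s_def .
qed

section \<open>The discrete Pruefer phase\<close>

text \<open>A discrete Pruefer angle: \<open>shooting_seq b x (j + 1) = r * sin (prufer_phase b j x)\<close>
  with \<open>r > 0\<close> (lemma \<open>shooting_seq_polar\<close>).\<close>

fun prufer_phase :: "(nat \<Rightarrow> real) \<Rightarrow> nat \<Rightarrow> real \<Rightarrow> real" where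
  "prufer_phase b 0 x = 2 * x"
| "prufer_phase b (Suc j) x = phase_step (prufer_phase b j x) (b (Suc j) * cot x) + 2 * x"

fun prufer_phase_deriv :: "(nat \<Rightarrow> real) \<Rightarrow> nat \<Rightarrow> real \<Rightarrow> real" where
  "prufer_phase_deriv b 0 x = 2"
| "prufer_phase_deriv b (Suc j) x =
     (prufer_phase_deriv b j x + b (Suc j) / sin x ^ 2 * sin (prufer_phase b j x) ^ 2)
       / phase_norm2 (prufer_phase b j x) (b (Suc j) * cot x) + 2"

text \<open>With \<open>b j = h\<^sup>2 a(x\<^sub>j) / 2\<close> and \<open>\<mu> = (2 tan x / h)\<^sup>2\<close>, the \<open>j\<close>-th row of
  \<open>(K\<^sub>h + L\<^sub>h) w = \<mu> M\<^sub>h w\<close> solved for \<open>w (j + 1)\<close>.\<close>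

fun shooting_seq :: "(nat \<Rightarrow> real) \<Rightarrow> real \<Rightarrow> nat \<Rightarrow> real" where
  "shooting_seq b x 0 = 0"
| "shooting_seq b x (Suc 0) = 1"
| "shooting_seq b x (Suc (Suc j)) =
     (2 * cos (2 * x) + 2 * b (Suc j) * cos x ^ 2) * shooting_seq b x (Suc j) - shooting_seq b x j"

lemma prufer_phase_pi_half: "prufer_phase b j (pi / 2) = (real j + 1) * pi"
  by (induction j) (simp_all add: cot_def algebra_simps)

lemma inverse_one_minus_power_le_exp:
  fixes u :: real
  assumes "0 \<le> u" "u \<le> 1/2"
  shows "(1 / (1 - u)) ^ n \<le> exp (2 * real n * u)"
proof -
  have "(1 + 2 * u) * (1 - u) = 1 + u * (1 - 2 * u)" by (simp add: algebra_simps)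
  moreover have "0 \<le> u * (1 - 2 * u)" using assms by simp
  ultimately have "1 \<le> (1 + 2 * u) * (1 - u)" by linarith
  then have "1 / (1 - u) \<le> 1 + 2 * u" using assms by (simp add: field_simps)
  also have "\<dots> \<le> exp (2 * u)" by (rule exp_ge_add_one_self)
  finally have "(1 / (1 - u)) ^ n \<le> exp (2 * u) ^ n" using assms by (intro power_mono) auto
  then show ?thesis by (simp add: exp_of_nat_mult[symmetric] mult_ac)
qed

lemma tan_diff_ge:
  assumes "0 \<le> x" "x \<le> y" "y < pi / 2"
  shows "y - x \<le> tan y - tan x"
proof (cases "x = y")
  case False
  then have "x < y" using assms by simp
  have cos_pos: "0 < cos z" if "x \<le> z" "z \<le> y" for z
    using assms that by (intro cos_gt_zero_pi) linarith+
  obtain z where z: "x < z" "z < y" "tan y - tan x = (y - x) * inverse (cos z ^ 2)"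
    using MVT2[OF \<open>x < y\<close>, of tan "\<lambda>z. inverse (cos z ^ 2)"] cos_pos by (force intro: DERIV_tan)
  have "cos z ^ 2 \<le> 1" by (simp add: cos_squared_eq)
  then have "1 \<le> inverse (cos z ^ 2)" using cos_pos[of z] z by (simp add: one_le_inverse)
  then show ?thesis using z \<open>x < y\<close> by (simp add: mult_le_cancel_left1)
qed simp

text \<open>The shooting recurrence in polar coordinates.\<close>

lemma prufer_rotation_step:
  fixes \<theta> g p t r \<rho> W0 W1 :: real
  assumes "0 < \<rho>" "cos g = \<rho> * (cos p + t * sin p)" "sin g = \<rho> * sin p"
    and W1: "W1 = r * sin p" and "cos \<theta> * W1 - W0 = r * sin \<theta> * cos p"
  defines "W2 \<equiv> (2 * cos \<theta> + t * sin \<theta>) * W1 - W0"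
  shows "W2 = r / \<rho> * sin (g + \<theta>)"
    and "cos \<theta> * W2 - W1 = r / \<rho> * sin \<theta> * cos (g + \<theta>)"
proof -
  define c s where "c = cos \<theta>" and "s = sin \<theta>"
  have W0: "W0 = c * W1 - r * s * cos p" using assms(5) by (simp add: c_def s_def)
  have W2: "W2 = (2 * c + t * s) * W1 - W0" by (simp add: W2_def c_def s_def)
  have "r / \<rho> * sin (g + \<theta>) = r * (sin p * c + (cos p + t * sin p) * s)"
    unfolding sin_add assms(2,3) c_def s_def using assms(1) by (simp add: field_simps)
  also have "\<dots> = W2" unfolding W2 W0 W1 by (simp add: algebra_simps)
  finally show "W2 = r / \<rho> * sin (g + \<theta>)" ..
  have "r / \<rho> * sin \<theta> * cos (g + \<theta>) = r * s * ((cos p + t * sin p) * c - sin p * s)"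
    unfolding cos_add assms(2,3) c_def s_def using assms(1) by (simp add: field_simps)
  also have "\<dots> = c * W2 - (c^2 + s^2) * W1"
    unfolding W2 W0 W1 by (simp add: algebra_simps power2_eq_square)
  finally show "cos \<theta> * W2 - W1 = r / \<rho> * sin \<theta> * cos (g + \<theta>)" by (simp add: c_def s_def)
qed

text \<open>\<open>b j\<close> stands for \<open>h\<^sup>2 a(x\<^sub>j) / 2\<close> with \<open>0 \<le> a \<le> A\<close>. The phase is studied for
  \<open>x \<in> [arctan (h/2), \<pi>/2]\<close>, where \<open>2 tan x / h \<ge> 1\<close> and the coupling \<open>b j * cot x\<close> stays
  below \<open>h A\<close>.\<close>

locale prufer_setting =
  fixes b :: "nat \<Rightarrow> real" and h A :: real and N :: nat
  assumes h_pos: "0 < h" and h_N: "h * (real N + 1) = 1"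
    and A_nonneg: "0 \<le> A" and hA: "h * A \<le> 1/2"
    and b_bounds: "\<And>j. 1 \<le> j \<Longrightarrow> j \<le> N \<Longrightarrow> 0 \<le> b j \<and> b j \<le> h^2 * A / 2"
begin

lemma h_le_1: "h \<le> 1"
  using h_N h_pos mult_left_mono[of 1 "real N + 1" h] by simp

lemma arctan_half_mesh_pos: "0 < arctan (h/2)"
  using h_pos by simp

lemma mesh_inverse: "real N + 1 = 1 / h"
  using h_N h_pos by (simp add: field_simps)

lemma sin_cos_bounds:
  assumes "arctan (h/2) \<le> x" "x \<le> pi/2"
  shows "0 < sin x" "0 \<le> cos x" "h * cos x \<le> 2 * sin x"
proof -
  have a: "0 < arctan (h/2)" "arctan (h/2) < pi/2" using arctan_half_mesh_pos arctan_ubound by auto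
  show "0 < sin x" using assms a by (intro sin_gt_zero) linarith+
  show "0 \<le> cos x" using assms a by (intro cos_ge_zero) linarith+
  show "h * cos x \<le> 2 * sin x"
  proof (cases "x = pi/2")
    case False
    then have "0 < cos x" using assms a by (intro cos_gt_zero) linarith+
    moreover have "h/2 \<le> tan x"
      using tan_mono_le[of "arctan (h/2)" x] assms a False by (simp add: tan_arctan)
    ultimately show ?thesis by (simp add: tan_def field_simps)
  next
    case True
    then have "cos x = 0" "sin x = 1" by (simp_all only: cos_pi_half sin_pi_half)
    then show ?thesis by simp
  qed
qed

lemma coupling_bounds:
  assumes "1 \<le> j" "j \<le> N" "arctan (h/2) \<le> x" "x \<le> pi/2"
  shows "0 \<le> b j * cot x" "b j * cot x \<le> h * A"
proof -
  note sc = sin_cos_bounds[OF assms(3,4)] and bj = b_bounds[OF assms(1,2)]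
  show "0 \<le> b j * cot x" using sc bj by (simp add: cot_def)
  have "0 \<le> cot x" using sc by (simp add: cot_def)
  then have "b j * cot x \<le> (h^2 * A / 2) * cot x" using bj by (intro mult_right_mono) auto
  also have "\<dots> = (h * A / 2) * (h * cos x) / sin x" by (simp add: cot_def power2_eq_square)
  also have "\<dots> \<le> (h * A / 2) * (2 * sin x) / sin x"
    using sc h_pos A_nonneg by (intro divide_right_mono mult_left_mono) auto
  finally show "b j * cot x \<le> h * A" using sc by simp
qed

lemma coupling_phase_denom_pos:
  "1 \<le> j \<Longrightarrow> j \<le> N \<Longrightarrow> arctan (h/2) \<le> x \<Longrightarrow> x \<le> pi/2 \<Longrightarrow>
    0 < 1 + b j * cot x * sin p * cos p"
  using coupling_bounds[of j x] hA by (intro phase_denom_pos) auto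

lemma coupling_phase_norm2_ge:
  "1 \<le> j \<Longrightarrow> j \<le> N \<Longrightarrow> arctan (h/2) \<le> x \<Longrightarrow> x \<le> pi/2 \<Longrightarrow>
    1 - h * A \<le> phase_norm2 p (b j * cot x)"
  using coupling_bounds[of j x] phase_norm2_ge[of "b j * cot x" p] by simp

lemma coupling_deriv_bounds:
  assumes "1 \<le> j" "j \<le> N" "arctan (h/2) \<le> x" "x \<le> pi/2"
  shows "0 \<le> b j / sin x ^ 2 * sin p ^ 2" "b j / sin x ^ 2 * sin p ^ 2 \<le> 5/2 * A"
proof -
  note sc = sin_cos_bounds[OF assms(3,4)] and bj = b_bounds[OF assms(1,2)]
  show "0 \<le> b j / sin x ^ 2 * sin p ^ 2" using bj by simp
  have "(h * cos x)^2 \<le> (2 * sin x)^2" using sc h_pos by (intro power_mono) auto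
  then have "h^2 \<le> sin x ^ 2 * (4 + h^2)"
    by (simp add: power_mult_distrib cos_squared_eq algebra_simps)
  also have "\<dots> \<le> sin x ^ 2 * 5" using h_le_1 h_pos by (intro mult_left_mono) (auto simp: power_le_one)
  finally have "h^2 * A \<le> 5 * sin x ^ 2 * A" using A_nonneg by (intro mult_right_mono) auto
  moreover have "0 < sin x ^ 2" using sc by simp
  ultimately have "b j / sin x ^ 2 \<le> 5/2 * A" using bj by (simp add: field_simps)
  moreover have "sin p ^ 2 \<le> 1" using sin_cos_squared_add[of p] zero_le_power2[of "cos p"] by linarith
  ultimately show "b j / sin x ^ 2 * sin p ^ 2 \<le> 5/2 * A"
    using mult_mono[of "b j / sin x ^ 2" "5/2 * A" "sin p ^ 2" 1] bj A_nonneg by simp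
qed

lemma prufer_phase_has_derivative:
  assumes "j \<le> N" "arctan (h/2) \<le> x" "x \<le> pi/2"
  shows "(prufer_phase b j has_real_derivative prufer_phase_deriv b j x) (at x)"
  using assms(1)
proof (induction j)
  case 0
  have "prufer_phase b 0 = (\<lambda>x. 2 * x)" by (rule ext) simp
  then show ?case by (auto intro!: derivative_eq_intros)
next
  case (Suc j)
  have "sin x \<noteq> 0" using sin_cos_bounds[OF assms(2,3)] by simp
  then have cot: "((\<lambda>x. b (Suc j) * cot x) has_real_derivative b (Suc j) * - inverse (sin x ^ 2)) (at x)"
    by (intro DERIV_cmult DERIV_cot)
  have "prufer_phase b (Suc j) = (\<lambda>x. phase_step (prufer_phase b j x) (b (Suc j) * cot x) + 2 * x)"
    by (rule ext) simp
  moreover have "prufer_phase_deriv b j x - b (Suc j) * - inverse (sin x ^ 2) * sin (prufer_phase b j x) ^ 2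
      = prufer_phase_deriv b j x + b (Suc j) / sin x ^ 2 * sin (prufer_phase b j x) ^ 2"
    by (simp add: field_simps)
  ultimately show ?case
    using phase_step_has_derivative[OF Suc.IH cot coupling_phase_denom_pos] Suc.prems assms
    by (auto intro!: derivative_eq_intros)
qed

lemma prufer_phase_deriv_bounds:
  assumes "j \<le> N" "arctan (h/2) \<le> x" "x \<le> pi/2"
  shows "0 \<le> prufer_phase_deriv b j x \<and>
    prufer_phase_deriv b j x \<le> (1 / (1 - h * A)) ^ j * (2 + real j * (5 * A + 2))"
  using assms(1)
proof (induction j)
  case (Suc j)
  define d p t q where "d = prufer_phase_deriv b j x" and "p = prufer_phase b j x"
    and "t = b (Suc j) * cot x" and "q = 1 / (1 - h * A)"
  have d: "0 \<le> d" "d \<le> q ^ j * (2 + real j * (5 * A + 2))" using Suc by (auto simp: d_def q_def)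
  have "1 - h * A \<le> phase_norm2 p t"
    using coupling_phase_norm2_ge[of "Suc j" x p] Suc.prems assms by (simp add: t_def)
  moreover have "0 < 1 - h * A" using hA by simp
  ultimately have inv_norm: "0 \<le> 1 / phase_norm2 p t" "1 / phase_norm2 p t \<le> q"
    unfolding q_def by (auto intro: divide_left_mono)
  have q: "1 \<le> q" "q \<le> 2" using hA h_pos A_nonneg by (auto simp: q_def field_simps)
  note coupling = coupling_deriv_bounds[of "Suc j" x p]
  have "prufer_phase_deriv b (Suc j) x = (d + b (Suc j) / sin x ^ 2 * sin p ^ 2) * (1 / phase_norm2 p t) + 2"
    by (simp add: d_def p_def t_def)
  also have "\<dots> \<le> (d + 5/2 * A) * q + 2"
    using d coupling inv_norm A_nonneg Suc.prems assms by (intro add_right_mono mult_mono) auto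
  also have "\<dots> \<le> q ^ Suc j * (2 + real (Suc j) * (5 * A + 2))"
  proof -
    have "d * q \<le> q ^ Suc j * (2 + real j * (5 * A + 2))"
      using mult_right_mono[OF d(2), of q] q by (simp add: mult.commute)
    moreover have "5/2 * A * q \<le> 5/2 * A * 2" using q A_nonneg by (intro mult_left_mono) auto
    moreover have "1 * (5 * A + 2) \<le> q ^ Suc j * (5 * A + 2)"
      using one_le_power[OF q(1), of "Suc j"] A_nonneg by (intro mult_right_mono) auto
    ultimately show ?thesis by (simp add: algebra_simps)
  qed
  finally show ?case
    using d coupling inv_norm Suc.prems assms unfolding q_def by (simp add: d_def p_def t_def)
qed simp

lemma prufer_phase_deriv_le:
  assumes "arctan (h/2) \<le> x" "x \<le> pi/2"
  shows "prufer_phase_deriv b N x \<le> exp (2 * A) * (5 * A + 2) * (real N + 1)"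
proof -
  have "0 \<le> h * A" using h_pos A_nonneg by simp
  then have "(1 / (1 - h * A)) ^ N \<le> exp (2 * real N * (h * A))"
    using hA by (intro inverse_one_minus_power_le_exp) auto
  also have "\<dots> \<le> exp (2 * A)"
  proof -
    have "real N * h \<le> 1" using h_N h_pos by (simp add: algebra_simps)
    from mult_right_mono[OF this A_nonneg] show ?thesis by (simp add: algebra_simps)
  qed
  finally have "(1 / (1 - h * A)) ^ N * (2 + real N * (5 * A + 2)) \<le> exp (2 * A) * ((5 * A + 2) * (real N + 1))"
    using A_nonneg by (intro mult_mono) (auto simp: algebra_simps)
  then show ?thesis using prufer_phase_deriv_bounds[OF order_refl assms] by (simp add: mult.assoc)
qed

lemma prufer_phase_increment_bounds:
  assumes "arctan (h/2) \<le> x" "x \<le> y" "y \<le> pi/2"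
  shows "0 \<le> prufer_phase b N y - prufer_phase b N x"
    "prufer_phase b N y - prufer_phase b N x \<le> exp (2 * A) * (5 * A + 2) * (real N + 1) * (y - x)"
proof -
  have "\<exists>z. x \<le> z \<and> z \<le> y \<and> prufer_phase b N y - prufer_phase b N x = (y - x) * prufer_phase_deriv b N z"
  proof (cases "x = y")
    case False
    then have "x < y" using assms by simp
    moreover have "(prufer_phase b N has_real_derivative prufer_phase_deriv b N z) (at z)"
      if "x \<le> z" "z \<le> y" for z
      using prufer_phase_has_derivative[OF order_refl] assms that by auto
    ultimately obtain z where "x < z" "z < y"
      "prufer_phase b N y - prufer_phase b N x = (y - x) * prufer_phase_deriv b N z"
      using MVT2[of x y "prufer_phase b N" "prufer_phase_deriv b N"] by blast
    then show ?thesis by (intro exI[of _ z]) auto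
  qed auto
  then obtain z where z: "x \<le> z" "z \<le> y"
    "prufer_phase b N y - prufer_phase b N x = (y - x) * prufer_phase_deriv b N z" by blast
  have "0 \<le> prufer_phase_deriv b N z" using prufer_phase_deriv_bounds[OF order_refl] assms z by simp
  then show "0 \<le> prufer_phase b N y - prufer_phase b N x" using z assms by simp
  show "prufer_phase b N y - prufer_phase b N x \<le> exp (2 * A) * (5 * A + 2) * (real N + 1) * (y - x)"
    using z assms prufer_phase_deriv_le[of z] by (simp add: mult.commute mult_left_mono)
qed

lemma prufer_phase_le:
  assumes "j \<le> N" "arctan (h/2) \<le> x" "x \<le> pi/2"
  shows "prufer_phase b j x \<le> 2 * x * (real j + 1)"
  using assms(1)
proof (induction j)
  case (Suc j)
  have "phase_step (prufer_phase b j x) (b (Suc j) * cot x) \<le> prufer_phase b j x"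
    using Suc.prems assms coupling_bounds[of "Suc j" x]
    by (intro phase_step_le coupling_phase_denom_pos) auto
  then show ?case using Suc by (simp add: algebra_simps)
qed simp

lemma prufer_phase_hits_multiple_of_pi:
  assumes "1 \<le> k" "k \<le> N"
  obtains x where "arctan (h/2) \<le> x" "x < pi/2" "prufer_phase b N x = real k * pi"
proof -
  define x0 where "x0 = arctan (h/2)"
  have x0: "0 < x0" "x0 < pi/2" using arctan_half_mesh_pos arctan_ubound by (auto simp: x0_def)
  have "prufer_phase b N x0 \<le> 2 * x0 * (real N + 1)" using prufer_phase_le[of N x0] x0 by (simp add: x0_def)
  also have "\<dots> \<le> 2 * (h/2) * (real N + 1)"
    unfolding x0_def using h_pos by (intro mult_right_mono mult_left_mono arctan_le_self) auto
  also have "\<dots> < 1 * pi" using h_N pi_gt3 by simp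
  also have "\<dots> \<le> real k * pi" using assms by (intro mult_right_mono) auto
  finally have below: "prufer_phase b N x0 < real k * pi" .
  have above: "real k * pi < prufer_phase b N (pi/2)"
    unfolding prufer_phase_pi_half using assms by simp
  have "\<forall>x. x0 \<le> x \<and> x \<le> pi/2 \<longrightarrow> isCont (prufer_phase b N) x"
    using prufer_phase_has_derivative[OF order_refl] DERIV_isCont by (auto simp: x0_def)
  then obtain x where "x0 \<le> x" "x \<le> pi/2" "prufer_phase b N x = real k * pi"
    using IVT[of "prufer_phase b N" x0 "real k * pi" "pi/2"] below above x0 by auto
  moreover have "x \<noteq> pi/2" using above calculation(3) by (metis less_irrefl)
  ultimately show ?thesis using that by (simp add: x0_def)
qed

lemma prufer_root_spacing:
  assumes "arctan (h/2) \<le> x" "x < pi/2" "arctan (h/2) \<le> y" "y < pi/2"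
    and "prufer_phase b N x = real k * pi" "prufer_phase b N y = real l * pi" "k \<noteq> l"
  shows "2 * pi / (exp (2 * A) * (5 * A + 2)) \<le> \<bar>2 * tan x / h - 2 * tan y / h\<bar>"
proof -
  define C where "C = exp (2 * A) * (5 * A + 2)"
  have C: "0 < C" using A_nonneg by (simp add: C_def add_pos_nonneg)
  have spacing: "2 * pi / C \<le> 2 * tan v / h - 2 * tan u / h"
    if "arctan (h/2) \<le> u" "u \<le> v" "v < pi/2" "prufer_phase b N u = real k' * pi"
      "prufer_phase b N v = real l' * pi" "k' \<noteq> l'" for u v k' l'
  proof -
    note incr = prufer_phase_increment_bounds[of u v, folded C_def]
    have "0 \<le> (real l' - real k') * pi" using incr(1) that by (simp add: algebra_simps)
    then have "real k' + 1 \<le> real l'" using that(6) pi_gt_zero by (auto simp: zero_le_mult_iff)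
    then have "pi \<le> (real l' - real k') * pi" using mult_right_mono[of 1 "real l' - real k'" pi] by simp
    also have "\<dots> \<le> C * (real N + 1) * (v - u)" using incr(2) that by (simp add: algebra_simps)
    also have "\<dots> \<le> C * (real N + 1) * (tan v - tan u)"
      using that C tan_diff_ge[of u v] arctan_half_mesh_pos
      by (intro mult_left_mono) auto
    finally have "2 * pi / C \<le> 2 * (real N + 1) * (tan v - tan u)" using C by (simp add: field_simps)
    also have "\<dots> = 2 * tan v / h - 2 * tan u / h"
      unfolding mesh_inverse using h_pos by (simp add: field_simps)
    finally show ?thesis .
  qed
  show ?thesis
  proof (cases "x \<le> y")
    case True
    then show ?thesis using spacing[of x y k l] assms by (simp add: C_def)
  next
    case False
    then show ?thesis using spacing[of y x l k] assms by (simp add: C_def)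
  qed
qed

lemma prufer_roots:
  obtains x where "\<And>k. k \<in> {1..N} \<Longrightarrow> arctan (h/2) \<le> x k \<and> x k < pi/2"
    "\<And>k. k \<in> {1..N} \<Longrightarrow> prufer_phase b N (x k) = real k * pi"
proof -
  define x where "x k = (SOME x. arctan (h/2) \<le> x \<and> x < pi/2 \<and> prufer_phase b N x = real k * pi)"
    for k
  have "arctan (h/2) \<le> x k \<and> x k < pi/2 \<and> prufer_phase b N (x k) = real k * pi"
    if "k \<in> {1..N}" for k
  proof -
    have "1 \<le> k" "k \<le> N" using that by auto
    then obtain y where "arctan (h/2) \<le> y" "y < pi/2" "prufer_phase b N y = real k * pi"
      by (rule prufer_phase_hits_multiple_of_pi)
    then show ?thesis unfolding x_def by (intro someI) auto
  qed
  then show ?thesis using that[of x] by blast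
qed

lemma one_le_two_tan_div_h: "arctan (h/2) \<le> x \<Longrightarrow> x < pi/2 \<Longrightarrow> 1 \<le> 2 * tan x / h"
  using tan_mono_le[of "arctan (h/2)" x] arctan_lbound[of "h/2"] h_pos
  by (simp add: tan_arctan field_simps)

lemma shooting_seq_polar:
  assumes "j \<le> N" "arctan (h/2) \<le> x" "x < pi/2"
  shows "\<exists>r>0. shooting_seq b x (Suc j) = r * sin (prufer_phase b j x) \<and>
    cos (2 * x) * shooting_seq b x (Suc j) - shooting_seq b x j = r * sin (2 * x) * cos (prufer_phase b j x)"
  using assms(1)
proof (induction j)
  case 0
  have "0 < x" using arctan_half_mesh_pos assms(2) by linarith
  then have "0 < sin (2 * x)" using assms(3) by (intro sin_gt_zero) auto
  then show ?case by (intro exI[of _ "1 / sin (2 * x)"]) simp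
next
  case (Suc j)
  define p t where "p = prufer_phase b j x" and "t = b (Suc j) * cot x"
  obtain r where r: "0 < r" "shooting_seq b x (Suc j) = r * sin p"
    "cos (2 * x) * shooting_seq b x (Suc j) - shooting_seq b x j = r * sin (2 * x) * cos p"
    using Suc by (auto simp: p_def)
  have "0 < 1 + t * sin p * cos p"
    using coupling_phase_denom_pos[of "Suc j" x p] Suc.prems assms by (simp add: t_def)
  then obtain \<rho> where \<rho>: "0 < \<rho>" "cos (phase_step p t) = \<rho> * (cos p + t * sin p)"
    "sin (phase_step p t) = \<rho> * sin p"
    by (rule cos_sin_phase_step)
  have "0 < sin x" using sin_cos_bounds[of x] assms by simp
  then have "t * sin (2 * x) = 2 * b (Suc j) * cos x ^ 2"
    by (simp add: t_def cot_def sin_double power2_eq_square)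
  then have "shooting_seq b x (Suc (Suc j))
      = (2 * cos (2 * x) + t * sin (2 * x)) * shooting_seq b x (Suc j) - shooting_seq b x j"
    by simp
  moreover have "prufer_phase b (Suc j) x = phase_step p t + 2 * x" by (simp add: p_def t_def)
  ultimately show ?case
    using prufer_rotation_step[OF \<rho> r(2,3)] r(1) \<rho>(1) by (intro exI[of _ "r / \<rho>"]) simp
qed

lemma eigenvalue_at_prufer_root:
  assumes b_eq: "\<And>j. b j = h^2 * a (real j * h) / 2" and N: "1 \<le> N"
    and x: "arctan (h/2) \<le> x" "x < pi/2" and root: "prufer_phase b N x = real k * pi"
  shows "eigenvalue (op_h a N) ((2 * tan x / h)^2)"
proof (rule eigenvalue_op_h_if_rows[where w = "shooting_seq b x"])
  have h: "mesh N = h" using mesh_inverse by (simp add: mesh_def)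
  have "0 < x" using x(1) arctan_half_mesh_pos by linarith
  then have "0 < cos x" using x(2) by (intro cos_gt_zero_pi) auto
  show "shooting_seq b x (Suc N) = 0"
    using shooting_seq_polar[OF order_refl x] root by auto
  fix i assume "i < N"
  let ?U = "shooting_seq b x i"
  let ?W = "shooting_seq b x (Suc i)"
  let ?V = "shooting_seq b x (Suc (Suc i))"
  let ?a = "a (real (i + 1) * h)"
  have "(1 / h) * (2 * ?W - ?U - ?V) + h * ?a * ?W = (2 * tan x / h)^2 * ((h / 4) * (2 * ?W + ?U + ?V))"
  proof -
    have W2: "?V = (2 * (2 * cos x ^ 2 - 1) + h^2 * ?a * cos x ^ 2) * ?W - ?U"
      by (simp only: shooting_seq.simps cos_double_cos b_eq) (simp add: algebra_simps)
    have tan2: "tan x ^ 2 = (1 - cos x ^ 2) / cos x ^ 2"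
      by (simp add: tan_def power_divide sin_squared_eq)
    show ?thesis unfolding W2 power_mult_distrib power_divide tan2
      using \<open>0 < cos x\<close> h_pos by (simp add: field_simps power2_eq_square)
  qed
  then show "1 / mesh N * (2 * ?W - ?U - ?V) + mesh N * a (real (i + 1) * mesh N) * ?W =
      (2 * tan x / h)^2 * (mesh N / 4 * (2 * ?W + ?U + ?V))"
    unfolding h .
qed (use N in simp_all)

end

lemma bounded_nonneg_le:
  fixes a :: "real \<Rightarrow> real"
  assumes "\<forall>x\<in>S. 0 \<le> a x" "bounded (a ` S)"
  obtains A where "0 \<le> A" "\<forall>x\<in>S. 0 \<le> a x \<and> a x \<le> A"
proof -
  obtain B where "\<forall>y\<in>a ` S. norm y \<le> B" using assms(2) unfolding bounded_iff by blast
  then show ?thesis using that[of "max B 0"] assms(1) by fastforce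
qed

section \<open>The spectrum of \<open>M\<^sub>h\<^sup>-\<^sup>1 (K\<^sub>h + L\<^sub>h)\<close>\<close>

lemma prufer_setting_mesh:
  fixes a :: "real \<Rightarrow> real"
  assumes "0 \<le> A" "mesh N * A \<le> 1/2" and a: "\<forall>x\<in>{0..1}. 0 \<le> a x \<and> a x \<le> A"
  shows "prufer_setting (\<lambda>j. mesh N ^ 2 * a (real j * mesh N) / 2) (mesh N) A N"
proof
  show "0 < mesh N" "mesh N * (real N + 1) = 1" by (simp_all add: mesh_pos mesh_def)
  fix j assume "1 \<le> j" "j \<le> N"
  then have "real j * mesh N \<le> (real N + 1) * mesh N"
    using mesh_pos[of N] by (intro mult_right_mono) auto
  moreover have "0 \<le> real j * mesh N" using mesh_pos[of N] by simp
  ultimately have "0 \<le> a (real j * mesh N)" "a (real j * mesh N) \<le> A"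
    using a by (auto simp: mesh_def)
  then show "0 \<le> mesh N ^ 2 * a (real j * mesh N) / 2 \<and> mesh N ^ 2 * a (real j * mesh N) / 2 \<le> mesh N ^ 2 * A / 2"
    using mult_left_mono[of "a (real j * mesh N)" A "mesh N ^ 2"] by simp
qed (use assms in auto)

lemma op_h_spectrum:
  fixes a :: "real \<Rightarrow> real"
  assumes N: "1 \<le> N" and A: "0 \<le> A" "mesh N * A \<le> 1/2"
    and a: "\<forall>x\<in>{0..1}. 0 \<le> a x \<and> a x \<le> A"
  defines "S \<equiv> {\<mu>. eigenvalue (op_h a N) \<mu>}" and "\<gamma> \<equiv> 2 * pi / (exp (2 * A) * (5 * A + 2))"
  shows "card S = N" "\<forall>\<mu>\<in>S. 1 \<le> sqrt \<mu>" "\<forall>\<mu>\<in>S. \<forall>\<nu>\<in>S. \<mu> \<noteq> \<nu> \<longrightarrow> \<gamma> \<le> \<bar>sqrt \<mu> - sqrt \<nu>\<bar>"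
proof -
  define h where "h = mesh N"
  define b where "b j = h^2 * a (real j * h) / 2" for j
  interpret prufer_setting b h A N
    unfolding b_def h_def by (rule prufer_setting_mesh[OF A a])
  obtain x where x: "\<And>k. k \<in> {1..N} \<Longrightarrow> arctan (h/2) \<le> x k \<and> x k < pi/2"
    "\<And>k. k \<in> {1..N} \<Longrightarrow> prufer_phase b N (x k) = real k * pi"
    using prufer_roots by blast
  define \<mu> where "\<mu> k = (2 * tan (x k) / h)^2" for k
  have sqrt_\<mu>: "sqrt (\<mu> k) = 2 * tan (x k) / h" "1 \<le> sqrt (\<mu> k)" if "k \<in> {1..N}" for k
  proof -
    have "1 \<le> 2 * tan (x k) / h" using one_le_two_tan_div_h x(1)[OF that] by auto
    then show "sqrt (\<mu> k) = 2 * tan (x k) / h" "1 \<le> sqrt (\<mu> k)"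
      unfolding \<mu>_def real_sqrt_abs using abs_of_nonneg[of "2 * tan (x k) / h"] by simp_all
  qed
  have gap: "\<gamma> \<le> \<bar>sqrt (\<mu> k) - sqrt (\<mu> l)\<bar>" if "k \<in> {1..N}" "l \<in> {1..N}" "k \<noteq> l" for k l
    using prufer_root_spacing[of "x k" "x l" k l] x[OF that(1)] x[OF that(2)] that(3)
    unfolding sqrt_\<mu>(1)[OF that(1)] sqrt_\<mu>(1)[OF that(2)] \<gamma>_def by blast
  have "0 < \<gamma>" using A by (simp add: \<gamma>_def add_pos_nonneg)
  with gap have "inj_on \<mu> {1..N}" by (intro inj_onI) force
  then have card_\<mu>: "card (\<mu> ` {1..N}) = N" by (simp add: card_image)
  have "\<mu> ` {1..N} \<subseteq> S"
    using eigenvalue_at_prufer_root[OF b_def N] x by (auto simp: S_def \<mu>_def)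
  moreover have "finite S" "card S \<le> N"
    using eigenvalues_finite_card_le[OF op_h_carrier] by (simp_all add: S_def)
  ultimately have S: "S = \<mu> ` {1..N}"
    using card_\<mu> card_subset_eq by (metis card_mono order_antisym)
  show "card S = N" using card_\<mu> S by simp
  show "\<forall>\<mu>\<in>S. 1 \<le> sqrt \<mu>" using sqrt_\<mu>(2) S by auto
  show "\<forall>\<mu>\<in>S. \<forall>\<nu>\<in>S. \<mu> \<noteq> \<nu> \<longrightarrow> \<gamma> \<le> \<bar>sqrt \<mu> - sqrt \<nu>\<bar>"
    unfolding S using gap by blast
qed

lemma mu_h_eigenvalue:
  assumes "card {\<mu>. eigenvalue (op_h a N) \<mu>} = N" "1 \<le> k" "k \<le> N"
  shows "eigenvalue (op_h a N) (mu_h a N k)"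
proof -
  have "finite {\<mu>. eigenvalue (op_h a N) \<mu>}" using assms card.infinite by fastforce
  then show ?thesis
    using assms nth_mem[of "k - 1" "sorted_list_of_set {\<mu>. eigenvalue (op_h a N) \<mu>}"]
    by (simp add: mu_h_def)
qed

lemma mu_h_eq_iff:
  assumes "card {\<mu>. eigenvalue (op_h a N) \<mu>} = N" "1 \<le> k" "k \<le> N" "1 \<le> l" "l \<le> N"
  shows "mu_h a N k = mu_h a N l \<longleftrightarrow> k = l"
proof -
  have "finite {\<mu>. eigenvalue (op_h a N) \<mu>}" using assms card.infinite by fastforce
  then show ?thesis
    using assms nth_eq_iff_index_eq[of "sorted_list_of_set {\<mu>. eigenvalue (op_h a N) \<mu>}" "k - 1" "l - 1"]
    by (auto simp: mu_h_def)
qed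

lemma lambda_h_separated:
  fixes a :: "real \<Rightarrow> real" and N :: nat
  defines "S \<equiv> {\<mu>. eigenvalue (op_h a N) \<mu>}"
  assumes card: "card S = N" and ge_1: "\<forall>\<mu>\<in>S. 1 \<le> sqrt \<mu>"
    and gap: "\<forall>\<mu>\<in>S. \<forall>\<nu>\<in>S. \<mu> \<noteq> \<nu> \<longrightarrow> \<gamma> \<le> \<bar>sqrt \<mu> - sqrt \<nu>\<bar>"
    and nm: "n \<noteq> 0" "m \<noteq> 0" "n \<noteq> m" "\<bar>n\<bar> \<le> int N" "\<bar>m\<bar> \<le> int N"
  shows "min 2 \<gamma> \<le> \<bar>lambda_h a N n - lambda_h a N m\<bar>"
proof -
  define k l where "k = nat \<bar>n\<bar>" and "l = nat \<bar>m\<bar>"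
  have kl: "1 \<le> k" "k \<le> N" "1 \<le> l" "l \<le> N" using nm by (auto simp: k_def l_def)
  define p q where "p = sqrt (mu_h a N k)" and "q = sqrt (mu_h a N l)"
  have "1 \<le> p" "1 \<le> q" using ge_1 mu_h_eigenvalue[OF card[unfolded S_def]] kl by (auto simp: S_def p_def q_def)
  have lambda: "lambda_h a N n = sgn n * p" "lambda_h a N m = sgn m * q"
    by (simp_all add: lambda_h_def p_def q_def k_def l_def)
  consider "sgn n = sgn m" | "sgn n = - sgn m"
    using nm(1,2) by (cases "0 < n"; cases "0 < m") (auto simp: sgn_if)
  then show ?thesis
  proof cases
    case 1
    then have "k \<noteq> l" using nm by (auto simp: k_def l_def sgn_if split: if_splits)
    then have "\<gamma> \<le> \<bar>p - q\<bar>"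
      using gap mu_h_eigenvalue[OF card[unfolded S_def]] mu_h_eq_iff[OF card[unfolded S_def]] kl
      by (auto simp: S_def p_def q_def)
    then show ?thesis using 1 nm(1,2) unfolding lambda by (auto simp: sgn_if abs_minus_commute)
  next
    case 2
    then have "\<bar>lambda_h a N n - lambda_h a N m\<bar> = p + q"
      using nm(1,2) \<open>1 \<le> p\<close> \<open>1 \<le> q\<close> unfolding lambda by (auto simp: sgn_if)
    then show ?thesis using \<open>1 \<le> p\<close> \<open>1 \<le> q\<close> by linarith
  qed
qed

theorem theorem4:
  fixes a :: "real \<Rightarrow> real"
  assumes nonneg: "\<forall>x\<in>{0..1}. a x \<ge> 0"
    and bdd: "bounded (a ` {0..1})"
    and meas: "a \<in> borel_measurable (restrict_space lborel {0..1})"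
  shows "\<exists>h0 > 0. \<exists>\<gamma>0 > 0. \<forall>N::nat. N \<ge> 1 \<longrightarrow> mesh N < h0 \<longrightarrow>
           (\<forall>n m :: int. n \<noteq> 0 \<longrightarrow> m \<noteq> 0 \<longrightarrow> n \<noteq> m \<longrightarrow>
              \<bar>n\<bar> \<le> int N \<longrightarrow> \<bar>m\<bar> \<le> int N \<longrightarrow>
              \<bar>lambda_h a N n - lambda_h a N m\<bar> \<ge> \<gamma>0)"
proof -
  \<comment> \<open>Only the nodal values of \<open>a\<close> enter \<open>L\<^sub>h\<close>, so \<open>meas\<close> is not needed.\<close>
  obtain A where A: "0 \<le> A" "\<forall>x\<in>{0..1}. 0 \<le> a x \<and> a x \<le> A"
    using bounded_nonneg_le[OF nonneg bdd] by blast
  define \<gamma> where "\<gamma> = 2 * pi / (exp (2 * A) * (5 * A + 2))"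
  have "0 < \<gamma>" using A by (simp add: \<gamma>_def add_pos_nonneg)
  have "min 2 \<gamma> \<le> \<bar>lambda_h a N n - lambda_h a N m\<bar>"
    if "1 \<le> N" "mesh N < 1 / (2 * A + 1)" "n \<noteq> 0" "m \<noteq> 0" "n \<noteq> m" "\<bar>n\<bar> \<le> int N" "\<bar>m\<bar> \<le> int N"
    for N n m
  proof -
    have "mesh N * (2 * A + 1) < 1" using that(2) A(1) by (simp add: field_simps)
    then have "mesh N * A \<le> 1/2" using mesh_pos[of N] by (simp add: algebra_simps)
    from op_h_spectrum[OF that(1) A(1) this A(2), folded \<gamma>_def] show ?thesis
      by (rule lambda_h_separated[OF _ _ _ that(3-)])
  qed
  then show ?thesis
    using \<open>0 < \<gamma>\<close> A(1) by (intro exI[of _ "1 / (2 * A + 1)"] conjI exI[of _ "min 2 \<gamma>"]) auto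
qed

end
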